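(* Let $\theta,\theta'$ be real antisymmetric $n\times n$ matrices and $l\ge 1$. The map $\Sigma$, defined on elementary tensors $\Phi=a\otimes\phi_1\otimes\cdots\otimes\phi_l\in \mathrm{B}^l$ by $$\Sigma(\Phi)(a_1,\ldots,a_l)=a\cdot\sigma(\phi_1)(a_1)\cdots\sigma(\phi_l)(a_l)$$ (ordinary commutative product of polynomials, the result regarded as an element of $A_{\theta'}$), extended by linearity and then to the completion $\mathbf{B}^l$, is an isomorphism of complexes $\Sigma:\mathbf{B}^l\to C^l$, i.e. it is a linear bijection satisfying $d_l\Sigma=\Sigma\partial_l$.
   Context: For a real antisymmetric $n\times n$ matrix $\theta$, $A_\theta$ is the unital dg-algebra over $\mathbb{R}$ generated by $x^1,\dots,x^n$ (degree $0$) and $\xi^1,\dots,\xi^n$ (degree $1$) with relations $x^ix^j-x^jx^i=\theta^{ij}$, $x^i\xi^j=\xi^jx^i$, $\xi^i\xi^j=0$, and differential $dx^i=\xi^i$, $d\xi^i=0$. As a vector space (for every $\theta$) $A_\theta$ is identified with the space of polynomials $a=a_0(x)+a_i(x)\xi^i$ in commuting $x$'s that are at most linear in the $\xi$'s (summation over repeated indices). $A_\theta[1]$ denotes the degree shift ($A_\theta[1]_k=(A_\theta)_{k+1}$), and $B^l(A_\theta)=A_\theta[1]^{\otimes l}$ with the differential induced by $d$ (with Koszul signs). $C^l=\mathrm{Hom}(B^l(A_\theta),A_{\theta'}[1])$ is the graded space of all linear maps, with differential $d_l(f)=f\circ d$. Let $\mathrm{B}$ be the graded space of expressions $\phi=\phi^0(p)+\phi^i(p)\zeta_i$,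 where $\phi^0,\phi^i$ are formal power series in commuting variables $p_1,\dots,p_n$ of degree $0$ and $\zeta_i$ have degree $-1$; its differential is $\partial\phi=p_i\phi^i(p)$. Put $\mathrm{B}^l=A_\theta\otimes\mathrm{B}^{\otimes l}$, with $A_\theta$ regarded as a complex with zero differential, the degree of $a\otimes\phi_1\otimes\cdots\otimes\phi_l$ being $\deg\phi_1+\cdots+\deg\phi_l+\deg a+l-1$, and with $\partial_l$ the tensor-product differential. $\mathbf{B}^l$ is the completion of $\mathrm{B}^l$ with respect to the descending filtration by powers of the $p$'s. For $\phi\in\mathrm{B}$, $\sigma(\phi):A_\theta\to (A_\theta)_0$ sends $a=a_0(x)+a_j(x)\xi^j$ to $\phi^0(\partial_1,\dots,\partial_n)a_0(x)+\phi^j(\partial_1,\dots,\partial_n)a_j(x)$, where $\partial_i=\partial/\partial x^i$. *)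

theory Defs
  imports Complex_Main "HOL-Library.Poly_Mapping"
begin

(* Variables are indexed by a finite type 'n (so n = CARD('n)).
   'n mon : monomials x^alpha (or p^beta), exponents alpha :: 'n =>0 nat
   'n pol : ordinary commutative real polynomials in x^1..x^n          *)
type_synonym 'n mon = "'n \<Rightarrow>\<^sub>0 nat"
type_synonym 'n pol = "'n mon \<Rightarrow>\<^sub>0 real"

(* An element a = a_0(x) + a_j(x) xi^j of A_theta (vector-space identification,
   independent of theta):  a None = a_0,  a (Some j) = a_j.                    *)
type_synonym 'n Aelt = "'n option \<Rightarrow> 'n pol"

(* An element phi = phi^0(p) + phi^i(p) zeta_i of B (formal power series):
   phi None = phi^0, phi (Some i) = phi^i, as coefficient functions.         *)
type_synonym 'n Belt = "'n option \<Rightarrow> 'n mon \<Rightarrow> real"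

(* index of the topological basis element zeta-part/p^beta of B *)
type_synonym 'n bidx = "'n option \<times> 'n mon"

definition smult :: "real \<Rightarrow> 'n pol \<Rightarrow> 'n pol" where
  "smult r P = Poly_Mapping.map (\<lambda>c. r * c) P"

definition addA :: "'n Aelt \<Rightarrow> 'n Aelt \<Rightarrow> 'n Aelt" where
  "addA a b = (\<lambda>u. a u + b u)"
definition scaleA :: "real \<Rightarrow> 'n Aelt \<Rightarrow> 'n Aelt" where
  "scaleA r a = (\<lambda>u. smult r (a u))"

(* partial derivative d^beta / dx^beta of a polynomial *)
definition pdiffs :: "'n::finite mon \<Rightarrow> 'n pol \<Rightarrow> 'n pol" where
  "pdiffs \<beta> P = (\<Sum>\<gamma>\<in>Poly_Mapping.keys P.
     if (\<forall>i. Poly_Mapping.lookup \<beta> i \<le> Poly_Mapping.lookup \<gamma> i)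
     then Poly_Mapping.single (\<gamma> - \<beta>)
            (Poly_Mapping.lookup P \<gamma> * (\<Prod>i\<in>UNIV. fact (Poly_Mapping.lookup \<gamma> i) / fact (Poly_Mapping.lookup \<gamma> i - Poly_Mapping.lookup \<beta> i)))
     else 0)"

definition pdiff :: "'n::finite \<Rightarrow> 'n pol \<Rightarrow> 'n pol" where
  "pdiff j P = pdiffs (Poly_Mapping.single j 1) P"

(* the differential of A_theta: d(a_0 + a_j xi^j) = (d_j a_0) xi^j *)
definition dA :: "'n::finite Aelt \<Rightarrow> 'n Aelt" where
  "dA a = (\<lambda>u. case u of None \<Rightarrow> 0 | Some j \<Rightarrow> pdiff j (a None))"

(* parity operator a |-> (-1)^deg a  on A *)
definition parA :: "'n Aelt \<Rightarrow> 'n Aelt" where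
  "parA a = (\<lambda>u. if u = None then a u else - a u)"

(* s(d/dx) P for a formal power series s(p) (finite sum, since d^beta P = 0
   for all but finitely many beta) *)
definition apply_series :: "('n::finite mon \<Rightarrow> real) \<Rightarrow> 'n pol \<Rightarrow> 'n pol" where
  "apply_series s P = (\<Sum>\<beta>\<in>{\<beta>. pdiffs \<beta> P \<noteq> 0}. smult (s \<beta>) (pdiffs \<beta> P))"

(* sigma(phi)(a) = phi^0(d) a_0 + phi^j(d) a_j *)
definition sigma :: "'n::finite Belt \<Rightarrow> 'n Aelt \<Rightarrow> 'n pol" where
  "sigma \<phi> a = apply_series (\<phi> None) (a None) + (\<Sum>j\<in>UNIV. apply_series (\<phi> (Some j)) (a (Some j)))"

definition bvec :: "'n bidx \<Rightarrow> 'n Belt" where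
  "bvec b = (\<lambda>u \<gamma>. if u = fst b \<and> \<gamma> = snd b then 1 else 0)"

(* Completion bold-B^l of A_theta (x) B^{(x) l}: since each piece of fixed p-degree
   is A (x) (finite-dim.), an element is uniquely the convergent sum
   Sum_b Phi(b) (x) bvec b_1 (x) ... (x) bvec b_l with arbitrary coefficients
   Phi(b) in A_theta; b ranges over lists of length l of basis indices of B. *)
definition Bcompl :: "nat \<Rightarrow> ('n bidx list \<Rightarrow> 'n Aelt) set" where
  "Bcompl l = {\<Phi>. \<forall>b. length b \<noteq> l \<longrightarrow> (\<forall>u. \<Phi> b u = 0)}"

(* C^l = Hom(A[1]^{(x) l}, A[1]) represented as l-multilinear maps A^l -> A *)
definition Ccx :: "nat \<Rightarrow> ('n Aelt list \<Rightarrow> 'n Aelt) set" where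
  "Ccx l = {f. (\<forall>as. length as \<noteq> l \<longrightarrow> (\<forall>u. f as u = 0)) \<and>
     (\<forall>as k a c r. length as = l \<and> k < l \<longrightarrow>
        f (as[k := addA (scaleA r a) c]) = addA (scaleA r (f (as[k := a]))) (f (as[k := c])))}"

definition Sig :: "nat \<Rightarrow> ('n::finite bidx list \<Rightarrow> 'n Aelt) \<Rightarrow> ('n Aelt list \<Rightarrow> 'n Aelt)" where
  "Sig l \<Phi> = (\<lambda>as u. if length as = l then
      (\<Sum>b\<in>{b. length b = l \<and> (\<forall>k<l. sigma (bvec (b!k)) (as!k) \<noteq> 0)}.
          \<Phi> b u * (\<Prod>k<l. sigma (bvec (b!k)) (as!k)))
     else 0)"

(* d_l f = f o d, where d on A[1]^{(x) l} is the Koszul-signed tensor differential: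
   d(a_1..a_l) = Sum_k (-1)^{|a_1|'+..+|a_{k-1}|'} a_1 .. d a_k .. a_l,
   |a|' = deg a - 1 the degree in A[1]; the sign is produced by the
   operator -parA on the preceding factors. *)
definition dC :: "nat \<Rightarrow> ('n::finite Aelt list \<Rightarrow> 'n Aelt) \<Rightarrow> ('n Aelt list \<Rightarrow> 'n Aelt)" where
  "dC l f = (\<lambda>as u. if length as = l then
      (\<Sum>k<l. f (map (\<lambda>a. - parA a) (take k as) @ [dA (as!k)] @ drop (Suc k) as) u)
     else 0)"

(* Koszul sign (-1)^{deg phi + 1} of a basis element of B (deg zeta_i = -1) *)
definition sgnB :: "'n bidx \<Rightarrow> real" where
  "sgnB b = (if fst b = None then -1 else 1)"

(* partial_l on the completion, in coordinates: dual of
   a (x) phi_1 .. phi_l |-> Sum_k (Koszul sign) a (x) .. (x) partial phi_k (x) ..,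
   partial(phi^0 + phi^i zeta_i) = p_i phi^i. *)
definition dB :: "nat \<Rightarrow> ('n::finite bidx list \<Rightarrow> 'n Aelt) \<Rightarrow> ('n bidx list \<Rightarrow> 'n Aelt)" where
  "dB l \<Phi> = (\<lambda>b u. if length b = l then
      (\<Sum>k<l. (case b!k of
         (None, \<beta>) \<Rightarrow> smult (\<Prod>m<k. sgnB (b!m))
             (\<Sum>i\<in>{i. 1 \<le> Poly_Mapping.lookup \<beta> i}. \<Phi> (b[k := (Some i, \<beta> - Poly_Mapping.single i 1)]) u)
       | (Some _, _) \<Rightarrow> 0))
     else 0)"

end

theory Submission
  imports Defs "HOL-Library.FuncSet"
begin

(* On the basis vector bvec (v, \<beta>) of B, sigma acts by a \<mapsto> \<partial>^\<beta> a_v. Hence Sig \<Phi>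
   evaluated at (a_1, ..., a_l) is a finite sum over index tuples b of
   \<Phi> b * \<Prod>_k \<partial>^(\<beta>_k) (a_k)_(v_k), which is linear in \<Phi> and multilinear in the a_k.
   Since \<partial>_j \<partial>^\<beta> = \<partial>^(\<beta> + e_j), the term of d that differentiates a_k matches, after
   reindexing (Some j, \<beta>) \<mapsto> (None, \<beta> + e_j), the term of \<partial> that multiplies by p_j,
   with the same Koszul sign.
   On tuples of monomials x^\<alpha> and x^\<alpha> \<xi>^j, \<partial>^\<beta> x^\<alpha> vanishes unless \<beta> \<le> \<alpha> and is a
   positive constant for \<beta> = \<alpha>, so Sig is triangular with nonzero diagonal with respect
   to total degree. Back substitution inverts it, because a multilinear map is
   determined by its values on tuples of monomials. *)

section \<open>Scaling and partial derivatives of polynomials\<close>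

lemma smult_conv_mult: "smult r P = Poly_Mapping.single 0 r * P"
  unfolding smult_def by (rule mult_map_scale_conv_mult)

lemma lookup_smult [simp]: "Poly_Mapping.lookup (smult r P) \<gamma> = r * Poly_Mapping.lookup P \<gamma>"
  unfolding smult_def by (simp add: Poly_Mapping.map.rep_eq when_def)

lemma smult_0_left [simp]: "smult 0 P = 0"
  and smult_0_right [simp]: "smult r 0 = 0"
  and smult_1 [simp]: "smult 1 P = P"
  and smult_minus_1: "smult (- 1) P = - P"
  and smult_smult: "smult r (smult s P) = smult (r * s) P"
  by (rule poly_mapping_eqI; simp)+

lemma smult_eq_0_iff: "smult r P = 0 \<longleftrightarrow> r = 0 \<or> P = 0"
  by (auto simp: poly_mapping_eq_iff fun_eq_iff)

lemma prod_smult: "(\<Prod>m\<in>A. smult (c m) (f m)) = smult (\<Prod>m\<in>A. c m) (\<Prod>m\<in>A. f m)"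
  by (induction A rule: infinite_finite_induct) (simp_all add: smult_conv_mult mult_single algebra_simps)

lemma sum_single_lookup:
  "(\<Sum>\<gamma>\<in>Poly_Mapping.keys Q. Poly_Mapping.single \<gamma> (Poly_Mapping.lookup Q \<gamma>)) = Q"
  by (rule poly_mapping_eqI) (simp add: lookup_sum lookup_single when_def in_keys_iff)

lemma mon_diff_eq_iff:
  fixes \<alpha> \<beta> \<delta> :: "'n mon"
  assumes "Poly_Mapping.lookup \<beta> \<le> Poly_Mapping.lookup \<alpha>"
  shows "\<alpha> - \<beta> = \<delta> \<longleftrightarrow> \<alpha> = \<delta> + \<beta>"
  using assms
  by (auto simp: poly_mapping_eq_iff fun_eq_iff le_fun_def lookup_add lookup_minus)
    (metis le_add_diff_inverse2)

lemma mon_le_add: "Poly_Mapping.lookup \<beta> \<le> Poly_Mapping.lookup (\<delta> + \<beta> :: 'n mon)"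
  by (auto simp: le_fun_def lookup_add)

lemma mon_diff_single_add:
  "1 \<le> Poly_Mapping.lookup \<gamma> i \<Longrightarrow>
    \<gamma> - Poly_Mapping.single i 1 + Poly_Mapping.single i 1 = (\<gamma> :: 'n mon)"
  by (rule poly_mapping_eqI) (auto simp: lookup_add lookup_minus lookup_single when_def)

lemma finite_mon_below:
  "finite {\<beta> :: 'n::finite mon. Poly_Mapping.lookup \<beta> \<le> Poly_Mapping.lookup \<gamma>}"
proof -
  have "{\<beta>. Poly_Mapping.lookup \<beta> \<le> Poly_Mapping.lookup \<gamma>}
      = Poly_Mapping.lookup -` (PiE UNIV (\<lambda>i. {..Poly_Mapping.lookup \<gamma> i}))"
    by (auto simp: le_fun_def PiE_def extensional_def)
  moreover have "finite (PiE (UNIV :: 'n set) (\<lambda>i. {..Poly_Mapping.lookup \<gamma> i}))"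
    by (rule finite_PiE) auto
  ultimately show ?thesis
    by (metis finite_vimageI injI poly_mapping_eqI)
qed

(* \<partial>^\<beta> x^(\<delta>+\<beta>) = deriv_coeff \<beta> \<delta> * x^\<delta> *)
definition deriv_coeff :: "'n::finite mon \<Rightarrow> 'n mon \<Rightarrow> real" where
  "deriv_coeff \<beta> \<delta> = (\<Prod>i\<in>UNIV.
     fact (Poly_Mapping.lookup \<delta> i + Poly_Mapping.lookup \<beta> i) / fact (Poly_Mapping.lookup \<delta> i))"

lemma deriv_coeff_pos: "0 < deriv_coeff \<beta> \<delta>"
  unfolding deriv_coeff_def by (intro prod_pos) simp

lemma deriv_coeff_add: "deriv_coeff \<beta> \<delta> * deriv_coeff \<gamma> (\<delta> + \<beta>) = deriv_coeff (\<beta> + \<gamma>) \<delta>"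
  unfolding deriv_coeff_def prod.distrib[symmetric]
  by (rule prod.cong) (simp_all add: lookup_add add.assoc)

lemma lookup_pdiffs:
  "Poly_Mapping.lookup (pdiffs \<beta> P) \<delta> = deriv_coeff \<beta> \<delta> * Poly_Mapping.lookup P (\<delta> + \<beta>)"
proof -
  have "Poly_Mapping.lookup (pdiffs \<beta> P) \<delta>
      = (\<Sum>\<gamma>\<in>Poly_Mapping.keys P. if \<gamma> = \<delta> + \<beta> then deriv_coeff \<beta> \<delta> * Poly_Mapping.lookup P \<gamma> else 0)"
    unfolding pdiffs_def lookup_sum
    by (rule sum.cong) (auto simp: lookup_single when_def mon_diff_eq_iff deriv_coeff_def lookup_add le_fun_def)
  then show ?thesis
    by (simp add: in_keys_iff)
qed

lemma pdiffs_add: "pdiffs \<beta> (P + Q) = pdiffs \<beta> P + pdiffs \<beta> Q"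
  and pdiffs_smult: "pdiffs \<beta> (smult r P) = smult r (pdiffs \<beta> P)"
  and pdiffs_uminus: "pdiffs \<beta> (- P) = - pdiffs \<beta> P"
  and pdiffs_zero [simp]: "pdiffs \<beta> 0 = 0"
  by (rule poly_mapping_eqI; simp add: lookup_pdiffs lookup_add algebra_simps)+

lemma pdiffs_pdiffs: "pdiffs \<beta> (pdiffs \<gamma> P) = pdiffs (\<beta> + \<gamma>) P"
  by (rule poly_mapping_eqI)
    (simp add: lookup_pdiffs mult.assoc flip: deriv_coeff_add add.assoc)

lemma pdiffs_single:
  "pdiffs \<beta> (Poly_Mapping.single \<alpha> c) =
    (if Poly_Mapping.lookup \<beta> \<le> Poly_Mapping.lookup \<alpha>
     then Poly_Mapping.single (\<alpha> - \<beta>) (deriv_coeff \<beta> (\<alpha> - \<beta>) * c) else 0)"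
  by (rule poly_mapping_eqI) (auto simp: lookup_pdiffs lookup_single when_def mon_diff_eq_iff mon_le_add)

lemma finite_pdiffs_nonzero: "finite {\<beta>. pdiffs \<beta> P \<noteq> 0}"
proof (rule finite_subset)
  show "{\<beta>. pdiffs \<beta> P \<noteq> 0} \<subseteq>
      (\<Union>\<gamma>\<in>Poly_Mapping.keys P. {\<beta>. Poly_Mapping.lookup \<beta> \<le> Poly_Mapping.lookup \<gamma>})"
  proof
    fix \<beta> assume "\<beta> \<in> {\<beta>. pdiffs \<beta> P \<noteq> 0}"
    then obtain \<delta> where "Poly_Mapping.lookup P (\<delta> + \<beta>) \<noteq> 0"
      by (auto simp: poly_mapping_eq_iff fun_eq_iff lookup_pdiffs)
    then show "\<beta> \<in> (\<Union>\<gamma>\<in>Poly_Mapping.keys P. {\<beta>. Poly_Mapping.lookup \<beta> \<le> Poly_Mapping.lookup \<gamma>})"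
      by (auto simp: in_keys_iff le_fun_def lookup_add intro!: bexI[of _ "\<delta> + \<beta>"])
  qed
qed (auto intro: finite_mon_below)

lemma apply_series_bvec:
  "apply_series (bvec b v) P = (if v = fst b then pdiffs (snd b) P else 0)"
proof (cases "v = fst b")
  case True
  have "apply_series (bvec b v) P
      = (\<Sum>\<beta>\<in>{\<beta>. pdiffs \<beta> P \<noteq> 0}. if \<beta> = snd b then pdiffs \<beta> P else 0)"
    unfolding apply_series_def by (rule sum.cong) (auto simp: bvec_def True)
  also have "\<dots> = pdiffs (snd b) P"
    using finite_pdiffs_nonzero[of P] by (simp add: sum.delta')
  finally show ?thesis using True by simp
qed (simp add: apply_series_def bvec_def)

lemma sigma_bvec: "sigma (bvec b) a = pdiffs (snd b) (a (fst b))"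
  by (cases "fst b") (simp_all add: sigma_def apply_series_bvec)

section \<open>Sig as a finite sum\<close>

definition Sig_support :: "nat \<Rightarrow> 'n::finite Aelt list \<Rightarrow> 'n bidx list set" where
  "Sig_support l as = {b. length b = l \<and> (\<forall>k<l. sigma (bvec (b!k)) (as!k) \<noteq> 0)}"

definition sigma_prod :: "nat \<Rightarrow> 'n::finite Aelt list \<Rightarrow> 'n bidx list \<Rightarrow> 'n pol" where
  "sigma_prod l as b = (\<Prod>k<l. sigma (bvec (b!k)) (as!k))"

lemma Sig_eq_sum:
  "length as = l \<Longrightarrow> Sig l \<Phi> as u = (\<Sum>b\<in>Sig_support l as. \<Phi> b u * sigma_prod l as b)"
  by (simp add: Sig_def Sig_support_def sigma_prod_def)

lemma Sig_length_neq: "length as \<noteq> l \<Longrightarrow> Sig l \<Phi> as u = 0"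
  by (simp add: Sig_def)

lemma finite_Sig_support: "finite (Sig_support l as)"
proof (rule finite_subset)
  let ?A = "\<Union>k<l. \<Union>v. {v} \<times> {\<beta>. pdiffs \<beta> ((as!k) v) \<noteq> 0}"
  show "Sig_support l as \<subseteq> {b. set b \<subseteq> ?A \<and> length b = l}"
  proof (safe)
    fix b x assume "b \<in> Sig_support l as" "x \<in> set b"
    then obtain k where "k < l" "b!k = x" "sigma (bvec x) (as!k) \<noteq> 0"
      by (auto simp: Sig_support_def in_set_conv_nth)
    then show "x \<in> ?A"
      by (cases x) (auto simp: sigma_bvec)
  qed (simp add: Sig_support_def)
  show "finite {b. set b \<subseteq> ?A \<and> length b = l}"
    by (intro finite_lists_length_eq finite_UN_I finite_cartesian_product finite_pdiffs_nonzero) auto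
qed

lemma sigma_prod_eq_0: "length b = l \<Longrightarrow> b \<notin> Sig_support l as \<Longrightarrow> sigma_prod l as b = 0"
  unfolding sigma_prod_def Sig_support_def by (auto intro: prod_zero)

lemma Sig_eq_sum_superset:
  assumes "\<Phi> \<in> Bcompl l" "length as = l" "finite S" "Sig_support l as \<subseteq> S"
  shows "Sig l \<Phi> as u = (\<Sum>b\<in>S. \<Phi> b u * sigma_prod l as b)"
  unfolding Sig_eq_sum[OF assms(2)]
proof (rule sum.mono_neutral_left[OF assms(3,4)], intro ballI)
  fix b assume "b \<in> S - Sig_support l as"
  then show "\<Phi> b u * sigma_prod l as b = 0"
    using assms(1) by (cases "length b = l") (auto simp: Bcompl_def sigma_prod_eq_0)
qed

lemma Sig_linear:
  fixes \<Phi> \<Psi> :: "'n::finite bidx list \<Rightarrow> 'n Aelt"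
  shows "Sig l (\<lambda>b. addA (scaleA r (\<Phi> b)) (\<Psi> b)) = (\<lambda>as. addA (scaleA r (Sig l \<Phi> as)) (Sig l \<Psi> as))"
proof (intro ext)
  fix as :: "'n Aelt list" and u
  show "Sig l (\<lambda>b. addA (scaleA r (\<Phi> b)) (\<Psi> b)) as u = addA (scaleA r (Sig l \<Phi> as)) (Sig l \<Psi> as) u"
    by (cases "length as = l")
      (simp_all add: Sig_eq_sum Sig_length_neq addA_def scaleA_def smult_conv_mult
        sum_distrib_left sum.distrib algebra_simps)
qed

lemma sigma_bvec_addA:
  "sigma (bvec b) (addA (scaleA r a) c) = smult r (sigma (bvec b) a) + sigma (bvec b) c"
  by (simp add: sigma_bvec addA_def scaleA_def pdiffs_add pdiffs_smult)

lemma sigma_prod_list_update: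
  assumes "k < l" "length as = l"
  shows "sigma_prod l (as[k := a]) b
    = sigma (bvec (b!k)) a * (\<Prod>m\<in>{..<l} - {k}. sigma (bvec (b!m)) (as!m))"
proof -
  have "(\<Prod>m\<in>{..<l} - {k}. sigma (bvec (b!m)) (as[k := a] ! m))
      = (\<Prod>m\<in>{..<l} - {k}. sigma (bvec (b!m)) (as!m))"
    by (rule prod.cong) auto
  with assms show ?thesis
    unfolding sigma_prod_def by (simp add: prod.remove[of "{..<l}" k])
qed

lemma Sig_in_Ccx:
  fixes \<Phi> :: "'n::finite bidx list \<Rightarrow> 'n Aelt"
  assumes "\<Phi> \<in> Bcompl l"
  shows "Sig l \<Phi> \<in> Ccx l"
  unfolding Ccx_def
proof (intro CollectI conjI allI impI)
  fix as :: "'n Aelt list" and u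
  assume "length as \<noteq> l"
  then show "Sig l \<Phi> as u = 0" by (rule Sig_length_neq)
next
  fix as :: "'n Aelt list" and k and a c :: "'n Aelt" and r
  assume "length as = l \<and> k < l"
  then have len: "length as = l" and k: "k < l" by auto
  let ?x = "addA (scaleA r a) c"
  let ?S = "Sig_support l (as[k := ?x]) \<union> Sig_support l (as[k := a]) \<union> Sig_support l (as[k := c])"
  let ?R = "\<lambda>b. \<Prod>m\<in>{..<l} - {k}. sigma (bvec (b!m)) (as!m)"
  have Sig_update: "Sig l \<Phi> (as[k := y]) u = (\<Sum>b\<in>?S. \<Phi> b u * (sigma (bvec (b!k)) y * ?R b))"
    if "y \<in> {?x, a, c}" for y u
    using that assms len k
    by (subst Sig_eq_sum_superset) (auto simp: finite_Sig_support sigma_prod_list_update)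
  show "Sig l \<Phi> (as[k := ?x]) = addA (scaleA r (Sig l \<Phi> (as[k := a]))) (Sig l \<Phi> (as[k := c]))"
  proof (rule ext)
    fix u
    have "Sig l \<Phi> (as[k := ?x]) u = smult r (Sig l \<Phi> (as[k := a]) u) + Sig l \<Phi> (as[k := c]) u"
      by (simp only: Sig_update insertI1 insertI2 sigma_bvec_addA)
        (simp add: smult_conv_mult sum_distrib_left sum.distrib algebra_simps)
    then show "Sig l \<Phi> (as[k := ?x]) u = addA (scaleA r (Sig l \<Phi> (as[k := a]))) (Sig l \<Phi> (as[k := c])) u"
      by (simp add: addA_def scaleA_def)
  qed
qed

section \<open>Sig is a chain map\<close>

definition koszul_term :: "nat \<Rightarrow> 'n::finite Aelt list \<Rightarrow> 'n Aelt list" where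
  "koszul_term k as = map (\<lambda>a. - parA a) (take k as) @ [dA (as!k)] @ drop (Suc k) as"

definition koszul_sign :: "nat \<Rightarrow> 'n bidx list \<Rightarrow> real" where
  "koszul_sign k b = (\<Prod>m<k. sgnB (b!m))"

definition dB_summand ::
    "('n::finite bidx list \<Rightarrow> 'n Aelt) \<Rightarrow> nat \<Rightarrow> 'n bidx list \<Rightarrow> 'n option \<Rightarrow> 'n pol" where
  "dB_summand \<Phi> k b u = (case b!k of
      (None, \<beta>) \<Rightarrow> smult (koszul_sign k b)
         (\<Sum>i | 1 \<le> Poly_Mapping.lookup \<beta> i. \<Phi> (b[k := (Some i, \<beta> - Poly_Mapping.single i 1)]) u)
    | (Some _, _) \<Rightarrow> 0)"

lemma length_koszul_term: "k < l \<Longrightarrow> length as = l \<Longrightarrow> length (koszul_term k as) = l"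
  by (simp add: koszul_term_def)

lemma dC_eq_sum: "length as = l \<Longrightarrow> dC l f as u = (\<Sum>k<l. f (koszul_term k as) u)"
  by (simp add: dC_def koszul_term_def)

lemma dB_eq_sum: "length b = l \<Longrightarrow> dB l \<Phi> b u = (\<Sum>k<l. dB_summand \<Phi> k b u)"
  unfolding dB_def dB_summand_def koszul_sign_def
  by (auto intro!: sum.cong split: prod.splits option.splits)

lemma koszul_sign_list_update: "koszul_sign k (b[k := x]) = koszul_sign k b"
  unfolding koszul_sign_def by (rule prod.cong) auto

lemma sigma_bvec_neg_parA: "sigma (bvec b) (- parA a) = smult (sgnB b) (sigma (bvec b) a)"
  by (cases "fst b") (simp_all add: sigma_bvec parA_def sgnB_def pdiffs_uminus smult_minus_1)

lemma sigma_bvec_dA_None: "sigma (bvec (None, \<beta>)) (dA a) = 0"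
  by (simp add: sigma_bvec dA_def)

lemma sigma_bvec_dA_Some:
  "sigma (bvec (Some j, \<beta>)) (dA a) = sigma (bvec (None, \<beta> + Poly_Mapping.single j 1)) a"
  by (simp add: sigma_bvec dA_def pdiff_def pdiffs_pdiffs)

lemma sigma_bvec_koszul_term:
  assumes "m < length as" "k < length as" "length x = length as" "x!k = (Some j, \<beta>)"
  shows "sigma (bvec (x!m)) (koszul_term k as ! m)
    = smult (if m < k then sgnB (x!m) else 1)
        (sigma (bvec (x[k := (None, \<beta> + Poly_Mapping.single j 1)] ! m)) (as!m))"
  using assms
  by (auto simp: koszul_term_def nth_append nth_Cons' min_def sigma_bvec_neg_parA sigma_bvec_dA_Some)

lemma sigma_prod_koszul_term:
  assumes "k < l" "length as = l" "length x = l" "x!k = (Some j, \<beta>)"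
  shows "sigma_prod l (koszul_term k as) x
    = smult (koszul_sign k x) (sigma_prod l as (x[k := (None, \<beta> + Poly_Mapping.single j 1)]))"
proof -
  have "sigma_prod l (koszul_term k as) x = (\<Prod>m<l. smult (if m < k then sgnB (x!m) else 1)
      (sigma (bvec (x[k := (None, \<beta> + Poly_Mapping.single j 1)] ! m)) (as!m)))"
    unfolding sigma_prod_def using assms by (intro prod.cong refl sigma_bvec_koszul_term) auto
  also have "(\<Prod>m<l. if m < k then sgnB (x!m) else 1) = koszul_sign k x"
  proof -
    have "{..<l} \<inter> {m. m < k} = {..<k}" using assms(1) by auto
    then show ?thesis by (simp add: prod.If_cases koszul_sign_def)
  qed
  ultimately show ?thesis
    by (simp add: prod_smult sigma_prod_def)
qed

lemma Sig_support_koszul_term: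
  assumes "k < l" "length as = l"
  shows "x \<in> Sig_support l (koszul_term k as) \<longleftrightarrow> length x = l \<and>
    (\<exists>j \<beta>. x!k = (Some j, \<beta>) \<and> x[k := (None, \<beta> + Poly_Mapping.single j 1)] \<in> Sig_support l as)"
proof
  assume x: "x \<in> Sig_support l (koszul_term k as)"
  then have "sigma (bvec (x!k)) (dA (as!k)) \<noteq> 0"
    using assms by (auto simp: Sig_support_def koszul_term_def nth_append)
  then obtain j \<beta> where "x!k = (Some j, \<beta>)"
    by (metis sigma_bvec_dA_None option.exhaust prod.collapse)
  with x assms show "length x = l \<and>
    (\<exists>j \<beta>. x!k = (Some j, \<beta>) \<and> x[k := (None, \<beta> + Poly_Mapping.single j 1)] \<in> Sig_support l as)"
    by (auto simp: Sig_support_def sigma_bvec_koszul_term smult_eq_0_iff)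
next
  assume "length x = l \<and>
    (\<exists>j \<beta>. x!k = (Some j, \<beta>) \<and> x[k := (None, \<beta> + Poly_Mapping.single j 1)] \<in> Sig_support l as)"
  with assms show "x \<in> Sig_support l (koszul_term k as)"
    by (auto simp: Sig_support_def sigma_bvec_koszul_term smult_eq_0_iff sgnB_def split: if_splits)
qed

definition lower_indices :: "nat \<Rightarrow> 'n bidx list \<Rightarrow> 'n set" where
  "lower_indices k b = {i. fst (b!k) = None \<and> 1 \<le> Poly_Mapping.lookup (snd (b!k)) i}"

definition lower_at :: "nat \<Rightarrow> 'n bidx list \<times> 'n \<Rightarrow> 'n bidx list" where
  "lower_at k = (\<lambda>(b, i). b[k := (Some i, snd (b!k) - Poly_Mapping.single i 1)])"

(* Meant for x!k = (Some j, \<beta>), where it gives (x[k := (None, \<beta> + e_j)], j). *)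
definition raise_at :: "nat \<Rightarrow> 'n bidx list \<Rightarrow> 'n bidx list \<times> 'n" where
  "raise_at k x = (let j = the (fst (x!k)) in (x[k := (None, snd (x!k) + Poly_Mapping.single j 1)], j))"

lemma raise_at_Some:
  "x!k = (Some j, \<beta>) \<Longrightarrow> raise_at k x = (x[k := (None, \<beta> + Poly_Mapping.single j 1)], j)"
  by (simp add: raise_at_def)

lemma lower_at_raise_at:
  "k < length x \<Longrightarrow> x!k = (Some j, \<beta>) \<Longrightarrow> lower_at k (raise_at k x) = x"
  by (simp add: raise_at_Some lower_at_def) (metis list_update_id)

lemma list_update_lower_at:
  assumes "b!k = (None, \<gamma>)" "1 \<le> Poly_Mapping.lookup \<gamma> i"
  shows "(lower_at k (b, i))[k := (None, \<gamma> - Poly_Mapping.single i 1 + Poly_Mapping.single i 1)] = b"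
  unfolding lower_at_def prod.case list_update_overwrite mon_diff_single_add[OF assms(2)]
  by (metis assms(1) list_update_id)

lemma bij_betw_raise_at:
  assumes "k < l" "length as = l"
  shows "bij_betw (raise_at k)
    (Sig_support l (koszul_term k as)) (Sigma (Sig_support l as) (lower_indices k))"
proof (rule bij_betw_byWitness[where f' = "lower_at k"])
  show "\<forall>x\<in>Sig_support l (koszul_term k as). lower_at k (raise_at k x) = x"
    using assms(1) by (auto simp: Sig_support_koszul_term[OF assms] lower_at_raise_at)
  show "raise_at k ` Sig_support l (koszul_term k as) \<subseteq> Sigma (Sig_support l as) (lower_indices k)"
    using assms(1)
    by (auto simp: Sig_support_koszul_term[OF assms] raise_at_Some lower_indices_def lookup_add)
  have lower: "raise_at k (lower_at k (b, i)) = (b, i)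
      \<and> lower_at k (b, i) \<in> Sig_support l (koszul_term k as)"
    if "b \<in> Sig_support l as" "i \<in> lower_indices k b" for b i
  proof -
    have b: "length b = l" "fst (b!k) = None" and i: "1 \<le> Poly_Mapping.lookup (snd (b!k)) i"
      using that by (auto simp: Sig_support_def lower_indices_def)
    then have bk: "b!k = (None, snd (b!k))"
      by (metis prod.collapse)
    then show ?thesis
      using list_update_lower_at[OF bk i] b that assms
      by (auto simp: Sig_support_koszul_term raise_at_Some lower_at_def)
  qed
  then show "\<forall>q\<in>Sigma (Sig_support l as) (lower_indices k). raise_at k (lower_at k q) = q"
    and "lower_at k ` Sigma (Sig_support l as) (lower_indices k) \<subseteq> Sig_support l (koszul_term k as)"
    by auto
qed

lemma Sig_koszul_term:
  fixes \<Phi> :: "'n::finite bidx list \<Rightarrow> 'n Aelt"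
  assumes "k < l" "length as = l"
  shows "Sig l \<Phi> (koszul_term k as) u
    = (\<Sum>b\<in>Sig_support l as. dB_summand \<Phi> k b u * sigma_prod l as b)"
proof -
  define h where
    "h = (\<lambda>(b, i). smult (koszul_sign k b) (\<Phi> (lower_at k (b, i)) u) * sigma_prod l as b)"
  have "Sig l \<Phi> (koszul_term k as) u
      = (\<Sum>x\<in>Sig_support l (koszul_term k as). h (raise_at k x))"
  proof (unfold Sig_eq_sum[OF length_koszul_term[OF assms]], rule sum.cong[OF refl])
    fix x assume "x \<in> Sig_support l (koszul_term k as)"
    then obtain j \<beta> where x: "length x = l" "x!k = (Some j, \<beta>)"
      using Sig_support_koszul_term[OF assms] by blast
    moreover have "h (raise_at k x)
        = smult (koszul_sign k x) (\<Phi> x u) * sigma_prod l as (fst (raise_at k x))"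
      using lower_at_raise_at[of k x] x assms
      by (simp add: h_def case_prod_beta koszul_sign_list_update raise_at_Some x(2))
    ultimately show "\<Phi> x u * sigma_prod l (koszul_term k as) x = h (raise_at k x)"
      using assms by (simp add: raise_at_Some sigma_prod_koszul_term
          smult_conv_mult algebra_simps)
  qed
  also have "\<dots> = (\<Sum>b\<in>Sig_support l as. \<Sum>i\<in>lower_indices k b. h (b, i))"
    by (simp add: sum.reindex_bij_betw[OF bij_betw_raise_at[OF assms]] sum.Sigma finite_Sig_support)
  also have "\<dots> = (\<Sum>b\<in>Sig_support l as. dB_summand \<Phi> k b u * sigma_prod l as b)"
  proof (rule sum.cong[OF refl])
    fix b :: "'n bidx list"
    obtain v \<beta> where bk: "b!k = (v, \<beta>)" by fastforce
    show "(\<Sum>i\<in>lower_indices k b. h (b, i)) = dB_summand \<Phi> k b u * sigma_prod l as b"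
      using bk by (cases v)
        (simp_all add: lower_indices_def h_def lower_at_def dB_summand_def smult_conv_mult
          sum_distrib_left sum_distrib_right mult.assoc)
  qed
  finally show ?thesis .
qed

lemma dC_Sig:
  fixes \<Phi> :: "'n::finite bidx list \<Rightarrow> 'n Aelt"
  shows "dC l (Sig l \<Phi>) = Sig l (dB l \<Phi>)"
proof (intro ext)
  fix as :: "'n Aelt list" and u
  show "dC l (Sig l \<Phi>) as u = Sig l (dB l \<Phi>) as u"
  proof (cases "length as = l")
    case True
    have "dC l (Sig l \<Phi>) as u
        = (\<Sum>k<l. \<Sum>b\<in>Sig_support l as. dB_summand \<Phi> k b u * sigma_prod l as b)"
      using True by (simp add: dC_eq_sum Sig_koszul_term)
    also have "\<dots> = (\<Sum>b\<in>Sig_support l as. dB l \<Phi> b u * sigma_prod l as b)"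
      by (subst sum.swap) (simp add: dB_eq_sum Sig_support_def sum_distrib_right)
    also have "\<dots> = Sig l (dB l \<Phi>) as u"
      using True by (simp add: Sig_eq_sum)
    finally show ?thesis .
  qed (simp add: dC_def Sig_length_neq)
qed

section \<open>Sig is bijective\<close>

(* basisA (None, \<alpha>) is x^\<alpha> and basisA (Some j, \<alpha>) is x^\<alpha> \<xi>^j. *)
definition basisA :: "'n bidx \<Rightarrow> 'n Aelt" where
  "basisA x = (\<lambda>v. if v = fst x then Poly_Mapping.single (snd x) 1 else 0)"

lemma sigma_bvec_basisA:
  "sigma (bvec b) (basisA x) =
    (if fst b = fst x \<and> Poly_Mapping.lookup (snd b) \<le> Poly_Mapping.lookup (snd x)
     then Poly_Mapping.single (snd x - snd b) (deriv_coeff (snd b) (snd x - snd b)) else 0)"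
  by (simp add: sigma_bvec basisA_def pdiffs_single)

lemma sigma_bvec_basisA_self: "sigma (bvec x) (basisA x) = smult (deriv_coeff (snd x) 0) 1"
  by (simp add: sigma_bvec_basisA smult_conv_mult)

lemma sigma_bvec_basisA_eq_0_iff:
  "sigma (bvec b) (basisA x) = 0 \<longleftrightarrow>
    \<not> (fst b = fst x \<and> Poly_Mapping.lookup (snd b) \<le> Poly_Mapping.lookup (snd x))"
  using deriv_coeff_pos[of "snd b" "snd x - snd b"]
  by (auto simp: sigma_bvec_basisA poly_mapping_eq_iff fun_eq_iff lookup_single when_def)

lemma Sig_support_basisA:
  "length a = l \<Longrightarrow> b \<in> Sig_support l (map basisA a) \<longleftrightarrow> length b = l \<and>
    (\<forall>k<l. fst (b!k) = fst (a!k) \<and> Poly_Mapping.lookup (snd (b!k)) \<le> Poly_Mapping.lookup (snd (a!k)))"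
  by (auto simp: Sig_support_def sigma_bvec_basisA_eq_0_iff)

definition mon_degree :: "'n::finite mon \<Rightarrow> nat" where
  "mon_degree \<alpha> = (\<Sum>i\<in>UNIV. Poly_Mapping.lookup \<alpha> i)"

definition list_degree :: "'n::finite bidx list \<Rightarrow> nat" where
  "list_degree b = (\<Sum>k<length b. mon_degree (snd (b!k)))"

lemma mon_degree_mono:
  "Poly_Mapping.lookup \<beta> \<le> Poly_Mapping.lookup \<alpha> \<Longrightarrow> mon_degree \<beta> \<le> mon_degree \<alpha>"
  unfolding mon_degree_def le_fun_def by (rule sum_mono) simp

lemma mon_degree_strict_mono:
  assumes "Poly_Mapping.lookup \<beta> \<le> Poly_Mapping.lookup \<alpha>" "\<beta> \<noteq> \<alpha>"
  shows "mon_degree \<beta> < mon_degree \<alpha>"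
proof -
  obtain i where "Poly_Mapping.lookup \<beta> i < Poly_Mapping.lookup \<alpha> i"
    using assms by (metis le_fun_def order_less_le poly_mapping_eqI)
  then show ?thesis
    unfolding mon_degree_def using assms(1)
    by (intro sum_strict_mono_ex1) (auto simp: le_fun_def)
qed

lemma list_degree_less:
  assumes "length a = l" "b \<in> Sig_support l (map basisA a)" "b \<noteq> a"
  shows "list_degree b < list_degree a"
proof -
  have b: "length b = l"
    "\<forall>k<l. fst (b!k) = fst (a!k) \<and> Poly_Mapping.lookup (snd (b!k)) \<le> Poly_Mapping.lookup (snd (a!k))"
    using assms(1,2) Sig_support_basisA by blast+
  then obtain k where k: "k < l" "snd (b!k) \<noteq> snd (a!k)"
    using assms(1,3) by (metis nth_equalityI prod_eqI)
  then have "mon_degree (snd (b!k)) < mon_degree (snd (a!k))"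
    using b by (intro mon_degree_strict_mono) auto
  then show ?thesis
    unfolding list_degree_def b(1) assms(1) using b k
    by (intro sum_strict_mono_ex1) (auto intro: mon_degree_mono)
qed

definition diag_coeff :: "'n::finite bidx list \<Rightarrow> real" where
  "diag_coeff a = (\<Prod>k<length a. deriv_coeff (snd (a!k)) 0)"

lemma diag_coeff_pos: "0 < diag_coeff a"
  unfolding diag_coeff_def by (intro prod_pos deriv_coeff_pos)

lemma Sig_basisA_triangular:
  assumes "length a = l"
  shows "Sig l \<Phi> (map basisA a) u = smult (diag_coeff a) (\<Phi> a u)
    + (\<Sum>b\<in>Sig_support l (map basisA a) - {a}. \<Phi> b u * sigma_prod l (map basisA a) b)"
proof -
  have "a \<in> Sig_support l (map basisA a)"
    using assms by (simp add: Sig_support_basisA)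
  moreover have "sigma_prod l (map basisA a) a = smult (diag_coeff a) 1"
    using assms by (simp add: sigma_prod_def sigma_bvec_basisA_self prod_smult diag_coeff_def)
  ultimately show ?thesis
    using assms by (simp add: Sig_eq_sum sum.remove finite_Sig_support smult_conv_mult mult.commute)
qed

(* Back substitution in the triangular system of Sig_basisA_triangular. *)
function Sig_inv :: "nat \<Rightarrow> ('n::finite Aelt list \<Rightarrow> 'n Aelt) \<Rightarrow> 'n bidx list \<Rightarrow> 'n Aelt" where
  "Sig_inv l f a u = (if length a = l then smult (1 / diag_coeff a) (f (map basisA a) u
      - (\<Sum>b\<in>Sig_support l (map basisA a) - {a}. Sig_inv l f b u * sigma_prod l (map basisA a) b))
     else 0)"
  by auto
termination
  by (relation "measure (\<lambda>(l, f, a, u). list_degree a)") (auto intro: list_degree_less)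

declare Sig_inv.simps [simp del]

lemma Sig_inv_in_Bcompl: "Sig_inv l f \<in> Bcompl l"
  by (simp add: Bcompl_def Sig_inv.simps)

lemma Sig_inv_Sig:
  fixes \<Phi> :: "'n::finite bidx list \<Rightarrow> 'n Aelt"
  assumes "\<Phi> \<in> Bcompl l"
  shows "Sig_inv l (Sig l \<Phi>) = \<Phi>"
proof (intro ext)
  fix a :: "'n bidx list" and u
  show "Sig_inv l (Sig l \<Phi>) a u = \<Phi> a u"
  proof (induction a rule: measure_induct_rule[of list_degree])
    case (less a)
    show ?case
    proof (cases "length a = l")
      case True
      let ?B = "Sig_support l (map basisA a) - {a}"
      have "(\<Sum>b\<in>?B. Sig_inv l (Sig l \<Phi>) b u * sigma_prod l (map basisA a) b)
          = (\<Sum>b\<in>?B. \<Phi> b u * sigma_prod l (map basisA a) b)"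
        using True by (intro sum.cong refl arg_cong2[where f = times] less.IH list_degree_less) auto
      then show ?thesis
        using True diag_coeff_pos[of a]
        by (simp add: Sig_inv.simps[of l _ a] Sig_basisA_triangular smult_smult)
    next
      case False
      then show ?thesis using assms by (simp add: Sig_inv.simps Bcompl_def)
    qed
  qed
qed

lemma Sig_Sig_inv_basisA:
  assumes "length a = l"
  shows "Sig l (Sig_inv l f) (map basisA a) = f (map basisA a)"
proof
  fix u
  have "smult (diag_coeff a) (Sig_inv l f a u) = f (map basisA a) u
      - (\<Sum>b\<in>Sig_support l (map basisA a) - {a}. Sig_inv l f b u * sigma_prod l (map basisA a) b)"
    using assms diag_coeff_pos[of a] by (simp add: Sig_inv.simps[of l f a] smult_smult)
  then show "Sig l (Sig_inv l f) (map basisA a) u = f (map basisA a) u"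
    using assms by (simp add: Sig_basisA_triangular)
qed

lemma Aelt_basis_induct [case_names basisA linear_comb]:
  fixes P :: "'n::finite Aelt \<Rightarrow> bool"
  assumes basisA: "\<And>x. P (basisA x)"
    and linear_comb: "\<And>r a c. P a \<Longrightarrow> P c \<Longrightarrow> P (addA (scaleA r a) c)"
  shows "P a"
proof -
  have zero: "P (\<lambda>_. 0)"
  proof -
    have "P (addA (scaleA (- 1) (basisA x)) (basisA x))" for x
      by (intro linear_comb basisA)
    moreover have "addA (scaleA (- 1) (basisA x)) (basisA x) = (\<lambda>_. 0)" for x :: "'n bidx"
      by (auto simp: addA_def scaleA_def smult_minus_1)
    ultimately show ?thesis by simp
  qed
  let ?part = "\<lambda>F v. \<Sum>\<gamma>\<in>{\<gamma>. (v, \<gamma>) \<in> F}. Poly_Mapping.single \<gamma> (Poly_Mapping.lookup (a v) \<gamma>)"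
  have "P (?part F)" if "finite F" for F
    using that
  proof (induction F rule: finite_induct)
    case empty
    then show ?case using zero by simp
  next
    case (insert x F)
    have fin: "finite {\<gamma>. (v, \<gamma>) \<in> F}" for v
      using finite_imageI[OF insert(1), of snd] by (rule finite_subset[rotated]) force
    have insert_eq: "{\<gamma>. (v, \<gamma>) \<in> insert x F}
        = (if v = fst x then insert (snd x) {\<gamma>. (v, \<gamma>) \<in> F} else {\<gamma>. (v, \<gamma>) \<in> F})" for v
      by (cases x) auto
    have "?part (insert x F)
        = addA (scaleA (Poly_Mapping.lookup (a (fst x)) (snd x)) (basisA x)) (?part F)"
    proof
      fix v
      show "?part (insert x F) v
          = addA (scaleA (Poly_Mapping.lookup (a (fst x)) (snd x)) (basisA x)) (?part F) v"
        using insert(2) fin[of v] unfolding insert_eq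
        by (cases "v = fst x")
          (auto simp: addA_def scaleA_def basisA_def smult_conv_mult mult_single)
    qed
    then show ?case by (simp only:) (intro linear_comb basisA insert.IH)
  qed
  from this[of "SIGMA v:UNIV. Poly_Mapping.keys (a v)"] show "P a"
    by (simp add: sum_single_lookup)
qed

lemma Ccx_length_neq: "f \<in> Ccx l \<Longrightarrow> length as \<noteq> l \<Longrightarrow> f as u = 0"
  by (simp add: Ccx_def)

lemma Ccx_multilinear:
  "f \<in> Ccx l \<Longrightarrow> length as = l \<Longrightarrow> k < l \<Longrightarrow>
    f (as[k := addA (scaleA r a) c]) = addA (scaleA r (f (as[k := a]))) (f (as[k := c]))"
  by (simp add: Ccx_def)

lemma Ccx_eq_list_update:
  fixes f g :: "'n::finite Aelt list \<Rightarrow> 'n Aelt"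
  assumes f: "f \<in> Ccx l" and g: "g \<in> Ccx l" and "length as = l" "m < l"
    and basis: "\<And>x. f (as[m := basisA x]) = g (as[m := basisA x])"
  shows "f (as[m := a]) = g (as[m := a])"
proof (induction a rule: Aelt_basis_induct)
  case (linear_comb r a c)
  then show ?case
    using assms(3,4) by (simp add: Ccx_multilinear[OF f] Ccx_multilinear[OF g])
qed (rule basis)

lemma Ccx_eqI:
  fixes f g :: "'n::finite Aelt list \<Rightarrow> 'n Aelt"
  assumes f: "f \<in> Ccx l" and g: "g \<in> Ccx l"
    and basis: "\<And>a. length a = l \<Longrightarrow> f (map basisA a) = g (map basisA a)"
  shows "f = g"
proof -
  have eq: "f as = g as" if "length as = l" "\<forall>k\<in>{m..<l}. as!k \<in> range basisA" for m as
    using that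
  proof (induction m arbitrary: as)
    case 0
    then have "\<exists>a. as = map basisA a"
      unfolding ex_map_conv by (fastforce simp: in_set_conv_nth)
    then show ?case using basis 0 by auto
  next
    case (Suc m)
    show ?case
    proof (cases "m < l")
      case True
      have "f (as[m := basisA x]) = g (as[m := basisA x])" for x
        using Suc by (intro Suc.IH) (auto simp: nth_list_update)
      from Ccx_eq_list_update[OF f g Suc.prems(1) True this, of "as!m"] show ?thesis by simp
    qed (use Suc in simp)
  qed
  show ?thesis
  proof (intro ext)
    fix as :: "'n Aelt list" and u
    show "f as u = g as u"
      using eq[of as l] Ccx_length_neq[OF f] Ccx_length_neq[OF g] by (cases "length as = l") simp_all
  qed
qed

lemma Sig_Sig_inv: "f \<in> Ccx l \<Longrightarrow> Sig l (Sig_inv l f) = f"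
  by (rule Ccx_eqI[OF Sig_in_Ccx[OF Sig_inv_in_Bcompl]]) (simp_all add: Sig_Sig_inv_basisA)

theorem proposition3:
  fixes \<theta> \<theta>' :: "'n::finite \<Rightarrow> 'n \<Rightarrow> real" and l :: nat
  assumes "\<forall>i j. \<theta> i j = - \<theta> j i"
      and "\<forall>i j. \<theta>' i j = - \<theta>' j i"
      and "1 \<le> l"
  shows "bij_betw (Sig l) (Bcompl l :: ('n bidx list \<Rightarrow> 'n Aelt) set) (Ccx l)
    \<and> (\<forall>\<Phi>\<in>Bcompl l :: ('n bidx list \<Rightarrow> 'n Aelt) set. \<forall>\<Psi>\<in>Bcompl l. \<forall>r.
          Sig l (\<lambda>b. addA (scaleA r (\<Phi> b)) (\<Psi> b))
          = (\<lambda>as. addA (scaleA r (Sig l \<Phi> as)) (Sig l \<Psi> as)))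
    \<and> (\<forall>\<Phi>\<in>Bcompl l :: ('n bidx list \<Rightarrow> 'n Aelt) set. dC l (Sig l \<Phi>) = Sig l (dB l \<Phi>))"
proof -
  have "bij_betw (Sig l) (Bcompl l :: ('n bidx list \<Rightarrow> 'n Aelt) set) (Ccx l)"
    by (rule bij_betw_byWitness[where f' = "Sig_inv l"])
      (auto simp: Sig_inv_Sig Sig_Sig_inv Sig_in_Ccx Sig_inv_in_Bcompl)
  then show ?thesis
    using Sig_linear dC_Sig by blast
qed

end
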